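(* Let $T$ be a PQ-tree with leaf set $E$, let $\vartriangleleft$ be a binary relation on $E$, and let $S$ be a subtree of $T$ with leaf set $E_S$. Suppose $T$ has a reordering compatible with $\vartriangleleft$. Let $S'$ be any reordering of $S$ (obtained by reordering operations applied only at inner nodes of $S$) such that for all $a,b\in E_S$, $a\vartriangleleft b$ implies $a<_{S'} b$. Then there exists a reordering $T'$ of $T$ compatible with $\vartriangleleft$ such that, for every inner node of $S$, the order of its children in $T'$ coincides with that in $S'$.
   Context: A PQ-tree on a finite set $E$ is a rooted tree whose leaves are in one-to-one correspondence with the elements of $E$, whose inner nodes are each either a P-node or a Q-node, each inner node has at least two children, and for each inner node a linear order of its children is fixed. $<_T$ denotes the linear ordering of $E$ obtained by reading the leaves of $T$ from left to right. The allowed reordering operations are: permuting the children of a P-node arbitrarily, and reversing the order of the children of a Q-node. A tree $T'$ is a reordering of $T$ if it is obtained from $T$ by finitely many such operations. A subtree consists of one inner node and all its descendants; it is itself a PQ-tree and $<_S$ is defined likewise. A reordering $T'$ is compatible with a relation $\vartriangleleft$ on $E$ if $a\vartriangleleft b$ implies $a<_{T'} b$ for all $a,b\in E$. *)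

theory Defs
  imports Main "HOL-Library.Multiset"
begin

datatype 'a pqtree = Leaf 'a | PNode "'a pqtree list" | QNode "'a pqtree list"

fun frontier :: "'a pqtree \<Rightarrow> 'a list" where
  "frontier (Leaf a) = [a]"
| "frontier (PNode cs) = concat (map frontier cs)"
| "frontier (QNode cs) = concat (map frontier cs)"

definition leaves :: "'a pqtree \<Rightarrow> 'a set" where
  "leaves T = set (frontier T)"

fun inner_ok :: "'a pqtree \<Rightarrow> bool" where
  "inner_ok (Leaf a) = True"
| "inner_ok (PNode cs) = (2 \<le> length cs \<and> (\<forall>c\<in>set cs. inner_ok c))"
| "inner_ok (QNode cs) = (2 \<le> length cs \<and> (\<forall>c\<in>set cs. inner_ok c))"

definition pq_tree :: "'a pqtree \<Rightarrow> bool" where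
  "pq_tree T \<longleftrightarrow> distinct (frontier T) \<and> inner_ok T"

fun is_inner :: "'a pqtree \<Rightarrow> bool" where
  "is_inner (Leaf a) = False"
| "is_inner _ = True"

definition less_in :: "'a pqtree \<Rightarrow> 'a \<Rightarrow> 'a \<Rightarrow> bool" where
  "less_in T a b \<longleftrightarrow> (\<exists>i j. i < j \<and> j < length (frontier T) \<and>
                         frontier T ! i = a \<and> frontier T ! j = b)"

inductive reorder_step :: "'a pqtree \<Rightarrow> 'a pqtree \<Rightarrow> bool" where
  perm_P: "mset cs' = mset cs \<Longrightarrow> reorder_step (PNode cs) (PNode cs')"
| rev_Q: "reorder_step (QNode cs) (QNode (rev cs))"
| in_P: "reorder_step c c' \<Longrightarrow> reorder_step (PNode (xs @ c # ys)) (PNode (xs @ c' # ys))"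
| in_Q: "reorder_step c c' \<Longrightarrow> reorder_step (QNode (xs @ c # ys)) (QNode (xs @ c' # ys))"

definition reordering :: "'a pqtree \<Rightarrow> 'a pqtree \<Rightarrow> bool" where
  "reordering T T' \<longleftrightarrow> rtranclp reorder_step T T'"

inductive subtree :: "'a pqtree \<Rightarrow> 'a pqtree \<Rightarrow> bool" where
  self: "is_inner S \<Longrightarrow> subtree S S"
| below_P: "subtree S c \<Longrightarrow> c \<in> set cs \<Longrightarrow> subtree S (PNode cs)"
| below_Q: "subtree S c \<Longrightarrow> c \<in> set cs \<Longrightarrow> subtree S (QNode cs)"

definition compatible :: "'a pqtree \<Rightarrow> ('a \<Rightarrow> 'a \<Rightarrow> bool) \<Rightarrow> bool" where
  "compatible T' R \<longleftrightarrow> (\<forall>a b. R a b \<longrightarrow> less_in T' a b)"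

end

theory Submission
  imports Defs
begin

text \<open>Reorderings form an equivalence relation that carries every subtree of \<open>T\<close> to a
  subtree of any reordering \<open>T\<^sub>0\<close> of \<open>T\<close>. Take \<open>T\<^sub>0\<close> compatible with the relation, let \<open>S\<^sub>0\<close> be
  the image of \<open>S\<close> in it and replace \<open>S\<^sub>0\<close> by \<open>S'\<close>, which is a reordering of \<open>S\<^sub>0\<close>. This only
  permutes the contiguous block of leaves of \<open>S\<close> in the frontier: pairs with both ends in the
  block are ordered as in \<open>S'\<close>, all other pairs keep their order from \<open>T\<^sub>0\<close>.\<close>

definition precedes :: "'a list \<Rightarrow> 'a \<Rightarrow> 'a \<Rightarrow> bool" where
  "precedes xs a b \<longleftrightarrow> (\<exists>i j. i < j \<and> j < length xs \<and> xs ! i = a \<and> xs ! j = b)"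

lemma less_in_eq_precedes: "less_in T = precedes (frontier T)"
  unfolding less_in_def precedes_def by (intro ext) (rule refl)

lemma precedes_append:
  "precedes (xs @ ys) a b \<longleftrightarrow>
     precedes xs a b \<or> precedes ys a b \<or> (a \<in> set xs \<and> b \<in> set ys)" (is "?lhs \<longleftrightarrow> ?rhs")
proof
  assume ?lhs
  then obtain i j where ij: "i < j" "j < length (xs @ ys)" "(xs @ ys) ! i = a" "(xs @ ys) ! j = b"
    unfolding precedes_def by blast
  consider "j < length xs" | "length xs \<le> i" | "i < length xs" "length xs \<le> j"
    using ij(1) by linarith
  then show ?rhs
  proof cases
    case 1
    then have "precedes xs a b" using ij unfolding precedes_def
      by (intro exI[of _ i] exI[of _ j]) (simp add: nth_append)
    then show ?thesis by blast
  next
    case 2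
    then have "precedes ys a b" using ij unfolding precedes_def
      by (intro exI[of _ "i - length xs"] exI[of _ "j - length xs"]) (auto simp: nth_append)
    then show ?thesis by blast
  next
    case 3
    then have "a \<in> set xs" "b \<in> set ys" using ij by (auto simp: nth_append)
    then show ?thesis by blast
  qed
next
  assume ?rhs
  then show ?lhs
  proof (elim disjE conjE)
    assume "precedes xs a b"
    then obtain i j where "i < j" "j < length xs" "xs ! i = a" "xs ! j = b"
      unfolding precedes_def by blast
    then show ?lhs unfolding precedes_def
      by (intro exI[of _ i] exI[of _ j]) (simp add: nth_append)
  next
    assume "precedes ys a b"
    then obtain i j where "i < j" "j < length ys" "ys ! i = a" "ys ! j = b"
      unfolding precedes_def by blast
    then show ?lhs unfolding precedes_def
      by (intro exI[of _ "length xs + i"] exI[of _ "length xs + j"]) (simp add: nth_append)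
  next
    assume "a \<in> set xs" "b \<in> set ys"
    then obtain i j where "i < length xs" "xs ! i = a" "j < length ys" "ys ! j = b"
      by (auto simp: in_set_conv_nth)
    then show ?lhs unfolding precedes_def
      by (intro exI[of _ i] exI[of _ "length xs + j"]) (simp add: nth_append)
  qed
qed

lemma less_in_imp_leaves: "less_in T a b \<Longrightarrow> a \<in> leaves T \<and> b \<in> leaves T"
  unfolding less_in_def leaves_def by auto

lemma reordering_in_P:
  "reordering c c' \<Longrightarrow> reordering (PNode (xs @ c # ys)) (PNode (xs @ c' # ys))"
  unfolding reordering_def
  by (induction rule: rtranclp_induct) (auto intro: rtranclp.rtrancl_into_rtrancl reorder_step.in_P)

lemma reordering_in_Q:
  "reordering c c' \<Longrightarrow> reordering (QNode (xs @ c # ys)) (QNode (xs @ c' # ys))"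
  unfolding reordering_def
  by (induction rule: rtranclp_induct) (auto intro: rtranclp.rtrancl_into_rtrancl reorder_step.in_Q)

lemma reorder_step_sym: "reorder_step A B \<Longrightarrow> reorder_step B A"
proof (induction rule: reorder_step.induct)
  case (perm_P cs' cs) then show ?case by (metis reorder_step.perm_P)
next
  case (rev_Q cs) then show ?case using reorder_step.rev_Q[of "rev cs"] by simp
qed (auto intro: reorder_step.in_P reorder_step.in_Q)

lemma reordering_refl: "reordering T T"
  unfolding reordering_def by (rule rtranclp.rtrancl_refl)

lemma reordering_sym: "reordering A B \<Longrightarrow> reordering B A"
  unfolding reordering_def by (metis sympI reorder_step_sym symp_rtranclp sympD)

lemma reordering_trans: "reordering A B \<Longrightarrow> reordering B C \<Longrightarrow> reordering A C"
  unfolding reordering_def by (rule rtranclp_trans)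

lemma reorder_step_leaves: "reorder_step A B \<Longrightarrow> leaves B = leaves A"
  by (induction rule: reorder_step.induct) (auto simp: leaves_def dest: mset_eq_setD)

lemma reordering_leaves: "reordering A B \<Longrightarrow> leaves B = leaves A"
  unfolding reordering_def by (induction rule: rtranclp_induct) (auto dest: reorder_step_leaves)

lemma reorder_step_is_inner: "reorder_step A B \<Longrightarrow> is_inner B"
  by (induction rule: reorder_step.induct) auto

lemma reordering_is_inner: "reordering A B \<Longrightarrow> is_inner A \<Longrightarrow> is_inner B"
  unfolding reordering_def by (induction rule: rtranclp_induct) (auto dest: reorder_step_is_inner)

lemma subtree_is_inner: "subtree S T \<Longrightarrow> is_inner S"
  by (induction rule: subtree.induct) auto

lemma subtree_PNode_iff: "subtree S (PNode cs) \<longleftrightarrow> S = PNode cs \<or> (\<exists>c\<in>set cs. subtree S c)"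
  by (auto elim: subtree.cases intro: subtree.intros)

lemma subtree_QNode_iff: "subtree S (QNode cs) \<longleftrightarrow> S = QNode cs \<or> (\<exists>c\<in>set cs. subtree S c)"
  by (auto elim: subtree.cases intro: subtree.intros)

lemma reorder_step_reordering: "reorder_step T T' \<Longrightarrow> reordering T T'"
  unfolding reordering_def by (rule r_into_rtranclp)

lemma reorder_step_subtree_root: "reorder_step T T' \<Longrightarrow> \<exists>S'. subtree S' T' \<and> reordering T S'"
  by (blast intro: subtree.self reorder_step_is_inner reorder_step_reordering)

lemma reorder_step_subtree:
  "reorder_step T T' \<Longrightarrow> subtree S T \<Longrightarrow> \<exists>S'. subtree S' T' \<and> reordering S S'"
proof (induction arbitrary: S rule: reorder_step.induct)
  case (perm_P cs' cs)
  with reorder_step_subtree_root[OF reorder_step.perm_P[OF perm_P(1)]] show ?case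
    unfolding subtree_PNode_iff reordering_def by (blast dest: mset_eq_setD)
next
  case (rev_Q cs)
  with reorder_step_subtree_root[OF reorder_step.rev_Q[of cs]] show ?case
    unfolding subtree_QNode_iff reordering_def by auto
next
  case (in_P c c' xs ys)
  from in_P.prems consider "S = PNode (xs @ c # ys)" | "subtree S c"
    | d where "d \<in> set (xs @ c' # ys)" "subtree S d"
    unfolding subtree_PNode_iff by auto
  then show ?case
  proof cases
    case 1
    then show ?thesis using reorder_step_subtree_root[OF reorder_step.in_P[OF in_P(1)]] by simp
  next
    case 2
    then show ?thesis using in_P.IH by (meson in_set_conv_decomp subtree.below_P)
  next
    case 3
    then show ?thesis using reordering_refl by (meson subtree.below_P)
  qed
next
  case (in_Q c c' xs ys)
  from in_Q.prems consider "S = QNode (xs @ c # ys)" | "subtree S c"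
    | d where "d \<in> set (xs @ c' # ys)" "subtree S d"
    unfolding subtree_QNode_iff by auto
  then show ?case
  proof cases
    case 1
    then show ?thesis using reorder_step_subtree_root[OF reorder_step.in_Q[OF in_Q(1)]] by simp
  next
    case 2
    then show ?thesis using in_Q.IH by (meson in_set_conv_decomp subtree.below_Q)
  next
    case 3
    then show ?thesis using reordering_refl by (meson subtree.below_Q)
  qed
qed

lemma reordering_subtree:
  "reordering T T' \<Longrightarrow> subtree S T \<Longrightarrow> \<exists>S'. subtree S' T' \<and> reordering S S'"
  unfolding reordering_def
proof (induction rule: rtranclp_induct)
  case (step U U')
  then obtain S1 where "subtree S1 U" "reorder_step\<^sup>*\<^sup>* S S1" by blast
  with reorder_step_subtree[OF step(2)] show ?case
    unfolding reordering_def by (meson rtranclp_trans)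
qed auto

inductive replace :: "'a pqtree \<Rightarrow> 'a pqtree \<Rightarrow> 'a pqtree \<Rightarrow> 'a pqtree \<Rightarrow> bool" where
  here: "replace A B A B"
| in_P: "replace A B c c' \<Longrightarrow> replace A B (PNode (xs @ c # ys)) (PNode (xs @ c' # ys))"
| in_Q: "replace A B c c' \<Longrightarrow> replace A B (QNode (xs @ c # ys)) (QNode (xs @ c' # ys))"

lemma subtree_imp_replace: "subtree S T \<Longrightarrow> \<exists>T'. replace S B T T'"
  by (induction rule: subtree.induct) (auto intro: replace.intros dest!: split_list)

lemma replace_subtree: "replace A B T T' \<Longrightarrow> is_inner B \<Longrightarrow> subtree B T'"
  by (induction rule: replace.induct) (auto intro: subtree.intros)

lemma replace_reordering: "replace A B T T' \<Longrightarrow> reordering A B \<Longrightarrow> reordering T T'"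
  by (induction rule: replace.induct) (auto intro: reordering_in_P reordering_in_Q)

lemma replace_frontier:
  "replace A B T T' \<Longrightarrow>
     \<exists>P Q. frontier T = P @ frontier A @ Q \<and> frontier T' = P @ frontier B @ Q"
proof (induction rule: replace.induct)
  case here show ?case by (intro exI[of _ "[]"]) simp
next
  case (in_P A B c c' xs ys)
  then obtain P Q where "frontier c = P @ frontier A @ Q" "frontier c' = P @ frontier B @ Q"
    by blast
  then show ?case
    by (intro exI[of _ "concat (map frontier xs) @ P"] exI[of _ "Q @ concat (map frontier ys)"]) simp
next
  case (in_Q A B c c' xs ys)
  then obtain P Q where "frontier c = P @ frontier A @ Q" "frontier c' = P @ frontier B @ Q"
    by blast
  then show ?case
    by (intro exI[of _ "concat (map frontier xs) @ P"] exI[of _ "Q @ concat (map frontier ys)"]) simp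
qed

lemma less_in_replace:
  assumes "replace A B T T'" and "leaves B = leaves A" and "less_in T a b"
    and "less_in A a b \<Longrightarrow> less_in B a b"
  shows "less_in T' a b"
proof -
  obtain P Q where PQ: "frontier T = P @ frontier A @ Q" "frontier T' = P @ frontier B @ Q"
    using replace_frontier[OF assms(1)] by blast
  have "set (frontier B) = set (frontier A)" using assms(2) unfolding leaves_def .
  with assms(3,4) show ?thesis
    unfolding less_in_eq_precedes PQ precedes_append set_append by blast
qed

theorem mainTheorem2:
  fixes T S S' :: "'a pqtree" and R :: "'a \<Rightarrow> 'a \<Rightarrow> bool"
  assumes "pq_tree T"
    and "\<forall>a b. R a b \<longrightarrow> a \<in> leaves T \<and> b \<in> leaves T"
    and "subtree S T"
    and "\<exists>T0. reordering T T0 \<and> compatible T0 R"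
    and "reordering S S'"
    and "\<forall>a\<in>leaves S. \<forall>b\<in>leaves S. R a b \<longrightarrow> less_in S' a b"
  shows "\<exists>T'. reordering T T' \<and> compatible T' R \<and> subtree S' T'"
proof -
  obtain T0 where T0: "reordering T T0" "compatible T0 R" using assms(4) by blast
  obtain S0 where S0: "subtree S0 T0" "reordering S S0"
    using reordering_subtree[OF T0(1) assms(3)] by blast
  have S0_S': "reordering S0 S'" using reordering_trans[OF reordering_sym[OF S0(2)] assms(5)] .
  obtain T' where T': "replace S0 S' T0 T'" using subtree_imp_replace[OF S0(1)] by blast
  have leaves_S0: "leaves S0 = leaves S" using reordering_leaves[OF S0(2)] .
  have "compatible T' R"
    unfolding compatible_def
  proof (intro allI impI)
    fix a b assume "R a b"
    show "less_in T' a b"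
    proof (rule less_in_replace[OF T' reordering_leaves[OF S0_S']])
      show "less_in T0 a b" using T0(2) \<open>R a b\<close> unfolding compatible_def by blast
    next
      assume "less_in S0 a b"
      with leaves_S0 have "a \<in> leaves S" "b \<in> leaves S" by (auto dest: less_in_imp_leaves)
      with assms(6) \<open>R a b\<close> show "less_in S' a b" by blast
    qed
  qed
  moreover have "reordering T T'" using reordering_trans[OF T0(1) replace_reordering[OF T' S0_S']] .
  moreover have "subtree S' T'"
    using replace_subtree[OF T' reordering_is_inner[OF assms(5) subtree_is_inner[OF assms(3)]]] .
  ultimately show ?thesis by blast
qed

end
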